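(* Let $T$ be a bounded linear operator from the Schreier space $S$ onto a Banach space $Y$, let $C>0$ satisfy $T(C\,B_S)\supseteq B_Y$, and let $(y_i')$ be a normalized weakly null basic sequence in $Y$. If no block basis of 1-averages of $(y_i')$ is equivalent to the unit vector basis of $c_0$, then there exists $\delta>0$ such that whenever $x\in S$ with $\|x\|\le 3C$, $Tx$ is a 1-average of $(y_i')$ and $\|Tx\|>1/3$, we have $\|x\|_0>\delta$.
   Context: Let $c_{00}$ be the space of finitely supported real sequences. For $x=(x_i)\in c_{00}$ set $\|x\|=\max\{\sum_{i=1}^p |x_{k_i}| : p\in\mathbb{N},\ p\le k_1<\cdots<k_p\}$; the Schreier space $S$ is the completion of $(c_{00},\|\cdot\|)$, and $\|x\|_0=\sup_i|x_i|$ denotes the $c_0$-norm. $B_S,B_Y$ are closed unit balls. A 1-average of $(y_n)$ is a vector $\lambda\sum_{n\in F}y_n$ with $\lambda>0$ and $F\subseteq\mathbb{N}$ finite nonempty; a block basis of 1-averages is a sequence $(\lambda_k\sum_{n\in F_k}y_n)_k$ of 1-averages with $\max F_k<\min F_{k+1}$. *)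

theory Defs
  imports "HOL-Analysis.Analysis"
begin

text \<open>Sequences are indexed from 0: coordinate i of a sequence represents the
  paper's coordinate x_{i+1}.  Hence a finite set F of (0-based) indices is
  Schreier-admissible iff card F \<le> Min F + 1 (paper: p \<le> k_1).\<close>

definition schreier_admissible :: "nat set \<Rightarrow> bool" where
  "schreier_admissible F \<longleftrightarrow> finite F \<and> (F \<noteq> {} \<longrightarrow> card F \<le> Min F + 1)"

definition schreier_sums :: "(nat \<Rightarrow> real) \<Rightarrow> real set" where
  "schreier_sums x = {(\<Sum>i\<in>F. \<bar>x i\<bar>) | F. schreier_admissible F}"

definition schreier_norm :: "(nat \<Rightarrow> real) \<Rightarrow> real" where
  "schreier_norm x = Sup (schreier_sums x)"

definition tail_seq :: "nat \<Rightarrow> (nat \<Rightarrow> real) \<Rightarrow> (nat \<Rightarrow> real)" where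
  "tail_seq n x = (\<lambda>i. if i < n then 0 else x i)"

text \<open>The Schreier space S, realised concretely as the closure of c_00 inside
  the sequences of finite Schreier norm: those with finite norm whose tails tend
  to 0 in the Schreier norm.\<close>
definition schreier_space :: "(nat \<Rightarrow> real) set" where
  "schreier_space = {x. bdd_above (schreier_sums x) \<and>
      (\<lambda>n. schreier_norm (tail_seq n x)) \<longlonglongrightarrow> 0}"

definition sup_norm :: "(nat \<Rightarrow> real) \<Rightarrow> real" where
  "sup_norm x = (SUP i. \<bar>x i\<bar>)"

definition schreier_bounded_linear :: "((nat \<Rightarrow> real) \<Rightarrow> 'b::real_normed_vector) \<Rightarrow> bool" where
  "schreier_bounded_linear T \<longleftrightarrow>
     (\<forall>x\<in>schreier_space. \<forall>z\<in>schreier_space. T (\<lambda>i. x i + z i) = T x + T z) \<and>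
     (\<forall>x\<in>schreier_space. \<forall>c. T (\<lambda>i. c * x i) = c *\<^sub>R T x) \<and>
     (\<exists>K. \<forall>x\<in>schreier_space. norm (T x) \<le> K * schreier_norm x)"

definition weakly_null :: "(nat \<Rightarrow> 'b::real_normed_vector) \<Rightarrow> bool" where
  "weakly_null y \<longleftrightarrow> (\<forall>f :: 'b \<Rightarrow> real. bounded_linear f \<longrightarrow> (\<lambda>n. f (y n)) \<longlonglongrightarrow> 0)"

definition basic_sequence :: "(nat \<Rightarrow> 'b::real_normed_vector) \<Rightarrow> bool" where
  "basic_sequence y \<longleftrightarrow>
     (\<forall>z\<in>closure (span (range y)).
        \<exists>!a :: nat \<Rightarrow> real. (\<lambda>n. \<Sum>i<n. a i *\<^sub>R y i) \<longlonglongrightarrow> z)"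

definition one_average :: "(nat \<Rightarrow> 'b::real_normed_vector) \<Rightarrow> 'b \<Rightarrow> bool" where
  "one_average y v \<longleftrightarrow>
     (\<exists>lam F. lam > 0 \<and> finite F \<and> F \<noteq> {} \<and> v = lam *\<^sub>R (\<Sum>n\<in>F. y n))"

definition block_basis_of_1_averages ::
    "(nat \<Rightarrow> 'b::real_normed_vector) \<Rightarrow> (nat \<Rightarrow> 'b) \<Rightarrow> bool" where
  "block_basis_of_1_averages y u \<longleftrightarrow>
     (\<exists>lam F. (\<forall>k. lam k > (0::real) \<and> finite (F k) \<and> F k \<noteq> {} \<and>
                   u k = lam k *\<^sub>R (\<Sum>n\<in>F k. y n)) \<and>
              (\<forall>k. Max (F k) < Min (F (Suc k))))"

definition equiv_c0_basis :: "(nat \<Rightarrow> 'b::real_normed_vector) \<Rightarrow> bool" where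
  "equiv_c0_basis u \<longleftrightarrow>
     (\<exists>A B. A > 0 \<and> B > 0 \<and>
        (\<forall>n (a :: nat \<Rightarrow> real).
           A * (MAX k\<in>{..n}. \<bar>a k\<bar>) \<le> norm (\<Sum>k\<le>n. a k *\<^sub>R u k) \<and>
           norm (\<Sum>k\<le>n. a k *\<^sub>R u k) \<le> B * (MAX k\<in>{..n}. \<bar>a k\<bar>)))"

end

theory Submission
  imports Defs
begin

text \<open>
  Suppose no such \<delta> exists. Then there are x in S of norm at most 3C, with arbitrarily small
  sup-norm, whose images are 1-averages of norm at least 1/3. Choosing them inductively, each
  one flat compared with the support of the previous ones (N k times its sup-norm at most 2^-k)
  and each essentially supported before N (k+1), an admissible set sees the bulk of at most one
  of them; so the x k, and hence the T (x k), satisfy an upper c0-estimate.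

  A Baire category argument gives (y i) a basis constant. Together with the upper estimate it
  bounds the total weight the averages T (x k) put on any fixed coordinate, so they eventually
  leave every initial segment. Cutting off their initial parts yields a block basis of
  1-averages that is a small perturbation of a subsequence of (T (x k)): it inherits the upper
  c0-estimate, and the basis constant provides the lower one.
  Only the boundedness of T is used: the weight bound takes the place of weak nullness of
  (y i), and neither surjectivity of T nor the covering constant C plays a role beyond the
  norm bound 3C.
\<close>

section \<open>The Schreier norm\<close>

lemma schreier_admissible_empty [simp]: "schreier_admissible {}"
  by (simp add: schreier_admissible_def)

lemma schreier_admissible_singleton: "schreier_admissible {i}"
  by (simp add: schreier_admissible_def)

lemma schreier_sum_le_norm:
  assumes "bdd_above (schreier_sums x)" "schreier_admissible F"
  shows "(\<Sum>i\<in>F. \<bar>x i\<bar>) \<le> schreier_norm x"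
  unfolding schreier_norm_def
  by (rule cSup_upper) (use assms in \<open>auto simp: schreier_sums_def\<close>)

lemma schreier_norm_le:
  assumes "\<And>F. schreier_admissible F \<Longrightarrow> (\<Sum>i\<in>F. \<bar>x i\<bar>) \<le> B"
  shows "schreier_norm x \<le> B"
proof -
  have "schreier_sums x \<noteq> {}"
    unfolding schreier_sums_def using schreier_admissible_empty by blast
  then show ?thesis
    unfolding schreier_norm_def
    by (rule cSup_least) (use assms in \<open>auto simp: schreier_sums_def\<close>)
qed

lemma bdd_above_schreier_sumsI:
  assumes "\<And>F. schreier_admissible F \<Longrightarrow> (\<Sum>i\<in>F. \<bar>x i\<bar>) \<le> B"
  shows "bdd_above (schreier_sums x)"
  using assms unfolding schreier_sums_def bdd_above_def by auto

lemma schreier_norm_nonneg: "bdd_above (schreier_sums x) \<Longrightarrow> 0 \<le> schreier_norm x"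
  using schreier_sum_le_norm[of x "{}"] by simp

lemma abs_le_schreier_norm: "bdd_above (schreier_sums x) \<Longrightarrow> \<bar>x i\<bar> \<le> schreier_norm x"
  using schreier_sum_le_norm[OF _ schreier_admissible_singleton] by simp

lemma abs_le_sup_norm:
  assumes "x \<in> schreier_space"
  shows "\<bar>x i\<bar> \<le> sup_norm x"
  unfolding sup_norm_def
  by (rule cSUP_upper)
    (use assms abs_le_schreier_norm in \<open>auto simp: schreier_space_def bdd_above_def\<close>)

lemma bdd_above_schreier_sums_tail:
  assumes "bdd_above (schreier_sums x)"
  shows "bdd_above (schreier_sums (tail_seq n x))"
proof (rule bdd_above_schreier_sumsI)
  fix F assume "schreier_admissible F"
  with assms have "(\<Sum>i\<in>F. \<bar>x i\<bar>) \<le> schreier_norm x"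
    by (rule schreier_sum_le_norm)
  moreover have "(\<Sum>i\<in>F. \<bar>tail_seq n x i\<bar>) \<le> (\<Sum>i\<in>F. \<bar>x i\<bar>)"
    by (rule sum_mono) (simp add: tail_seq_def)
  ultimately show "(\<Sum>i\<in>F. \<bar>tail_seq n x i\<bar>) \<le> schreier_norm x"
    by linarith
qed

lemma schreier_sum_le_tail_norm:
  assumes "bdd_above (schreier_sums x)" "schreier_admissible F" "\<And>i. i \<in> F \<Longrightarrow> n \<le> i"
  shows "(\<Sum>i\<in>F. \<bar>x i\<bar>) \<le> schreier_norm (tail_seq n x)"
proof -
  have "(\<Sum>i\<in>F. \<bar>x i\<bar>) = (\<Sum>i\<in>F. \<bar>tail_seq n x i\<bar>)"
    by (intro sum.cong) (auto simp: tail_seq_def dest!: assms(3))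
  also have "\<dots> \<le> schreier_norm (tail_seq n x)"
    using bdd_above_schreier_sums_tail[OF assms(1)] assms(2) by (rule schreier_sum_le_norm)
  finally show ?thesis .
qed

lemma sum_abs_lincomb_le:
  fixes x :: "'k \<Rightarrow> 'i \<Rightarrow> real"
  shows "(\<Sum>i\<in>F. \<bar>\<Sum>k\<in>K. a k * x k i\<bar>) \<le> (\<Sum>k\<in>K. \<bar>a k\<bar> * (\<Sum>i\<in>F. \<bar>x k i\<bar>))"
proof -
  have "(\<Sum>i\<in>F. \<bar>\<Sum>k\<in>K. a k * x k i\<bar>) \<le> (\<Sum>i\<in>F. \<Sum>k\<in>K. \<bar>a k\<bar> * \<bar>x k i\<bar>)"
  proof (rule sum_mono)
    fix i
    have "\<bar>\<Sum>k\<in>K. a k * x k i\<bar> \<le> (\<Sum>k\<in>K. \<bar>a k * x k i\<bar>)"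
      by (rule sum_abs)
    then show "\<bar>\<Sum>k\<in>K. a k * x k i\<bar> \<le> (\<Sum>k\<in>K. \<bar>a k\<bar> * \<bar>x k i\<bar>)"
      by (simp add: abs_mult)
  qed
  also have "\<dots> = (\<Sum>k\<in>K. \<bar>a k\<bar> * (\<Sum>i\<in>F. \<bar>x k i\<bar>))"
    by (subst sum.swap) (simp add: sum_distrib_left)
  finally show ?thesis .
qed

lemma schreier_norm_lincomb_le:
  assumes "\<And>k. k \<in> K \<Longrightarrow> bdd_above (schreier_sums (x k))"
  shows "bdd_above (schreier_sums (\<lambda>i. \<Sum>k\<in>K. a k * x k i))"
    and "schreier_norm (\<lambda>i. \<Sum>k\<in>K. a k * x k i) \<le> (\<Sum>k\<in>K. \<bar>a k\<bar> * schreier_norm (x k))"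
proof -
  have bound: "(\<Sum>i\<in>F. \<bar>\<Sum>k\<in>K. a k * x k i\<bar>) \<le> (\<Sum>k\<in>K. \<bar>a k\<bar> * schreier_norm (x k))"
    if "schreier_admissible F" for F
  proof -
    have "(\<Sum>k\<in>K. \<bar>a k\<bar> * (\<Sum>i\<in>F. \<bar>x k i\<bar>)) \<le> (\<Sum>k\<in>K. \<bar>a k\<bar> * schreier_norm (x k))"
      using schreier_sum_le_norm[OF assms that] by (intro sum_mono mult_left_mono) auto
    with sum_abs_lincomb_le[where F=F and K=K and a=a and x=x] show ?thesis
      by linarith
  qed
  show "bdd_above (schreier_sums (\<lambda>i. \<Sum>k\<in>K. a k * x k i))"
    by (rule bdd_above_schreier_sumsI) (rule bound)
  show "schreier_norm (\<lambda>i. \<Sum>k\<in>K. a k * x k i) \<le> (\<Sum>k\<in>K. \<bar>a k\<bar> * schreier_norm (x k))"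
    by (rule schreier_norm_le) (rule bound)
qed

lemma schreier_space_lincomb:
  assumes "\<And>k. k \<in> K \<Longrightarrow> x k \<in> schreier_space"
  shows "(\<lambda>i. \<Sum>k\<in>K. a k * x k i) \<in> schreier_space"
proof -
  have bdd: "bdd_above (schreier_sums (tail_seq n (x k)))" if "k \<in> K" for k n
    using assms[OF that] bdd_above_schreier_sums_tail by (simp add: schreier_space_def)
  have tail: "tail_seq n (\<lambda>i. \<Sum>k\<in>K. a k * x k i) = (\<lambda>i. \<Sum>k\<in>K. a k * tail_seq n (x k) i)" for n
    by (auto simp: tail_seq_def)
  have "\<forall>n. norm (schreier_norm (tail_seq n (\<lambda>i. \<Sum>k\<in>K. a k * x k i)))
      \<le> (\<Sum>k\<in>K. \<bar>a k\<bar> * schreier_norm (tail_seq n (x k)))"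
  proof
    fix n
    have "0 \<le> schreier_norm (\<lambda>i. \<Sum>k\<in>K. a k * tail_seq n (x k) i)"
      by (intro schreier_norm_nonneg schreier_norm_lincomb_le(1) bdd)
    with schreier_norm_lincomb_le(2)[OF bdd]
    show "norm (schreier_norm (tail_seq n (\<lambda>i. \<Sum>k\<in>K. a k * x k i)))
        \<le> (\<Sum>k\<in>K. \<bar>a k\<bar> * schreier_norm (tail_seq n (x k)))"
      unfolding tail by simp
  qed
  moreover have "(\<lambda>n. \<Sum>k\<in>K. \<bar>a k\<bar> * schreier_norm (tail_seq n (x k))) \<longlonglongrightarrow> 0"
    using assms by (intro tendsto_null_sum tendsto_mult_right_zero) (simp add: schreier_space_def)
  ultimately have "(\<lambda>n. schreier_norm (tail_seq n (\<lambda>i. \<Sum>k\<in>K. a k * x k i))) \<longlonglongrightarrow> 0"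
    by (rule Lim_null_comparison[OF always_eventually])
  moreover have "bdd_above (schreier_sums (\<lambda>i. \<Sum>k\<in>K. a k * x k i))"
    using assms by (intro schreier_norm_lincomb_le) (simp add: schreier_space_def)
  ultimately show ?thesis
    by (simp add: schreier_space_def)
qed

lemma schreier_bounded_linear_lincomb:
  assumes T: "schreier_bounded_linear T" and "finite K" "\<And>k. k \<in> K \<Longrightarrow> x k \<in> schreier_space"
  shows "T (\<lambda>i. \<Sum>k\<in>K. a k * x k i) = (\<Sum>k\<in>K. a k *\<^sub>R T (x k))"
proof -
  have add: "\<forall>x\<in>schreier_space. \<forall>z\<in>schreier_space. T (\<lambda>i. x i + z i) = T x + T z"
    and scale: "\<forall>x\<in>schreier_space. \<forall>c. T (\<lambda>i. c * x i) = c *\<^sub>R T x"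
    using T unfolding schreier_bounded_linear_def by blast+
  show ?thesis
    using assms(2,3)
  proof (induction K rule: finite_induct)
    case empty
    have "(\<lambda>i. 0) \<in> schreier_space"
      using schreier_space_lincomb[of "{}"] by simp
    from bspec[OF scale this, rule_format, of 0] show ?case
      by simp
  next
    case (insert k K)
    have "(\<lambda>i. a k * x k i) \<in> schreier_space" "(\<lambda>i. \<Sum>k\<in>K. a k * x k i) \<in> schreier_space"
      using schreier_space_lincomb[of "{k}"] schreier_space_lincomb[of K] insert.prems by auto
    with bspec[OF scale insert.prems[OF insertI1], rule_format, of "a k"] insert
    show ?case
      using bspec[OF bspec[OF add]] by simp
  qed
qed

lemma schreier_bounded_linear_bound:
  assumes "schreier_bounded_linear T"
  obtains K where "0 \<le> K" "\<And>x. x \<in> schreier_space \<Longrightarrow> norm (T x) \<le> K * schreier_norm x"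
proof -
  obtain K where K: "\<And>x. x \<in> schreier_space \<Longrightarrow> norm (T x) \<le> K * schreier_norm x"
    using assms unfolding schreier_bounded_linear_def by blast
  have "K * schreier_norm x \<le> max K 0 * schreier_norm x" if "x \<in> schreier_space" for x
    using that schreier_norm_nonneg by (intro mult_right_mono) (auto simp: schreier_space_def)
  with K that[of "max K 0"] show ?thesis
    by force
qed

section \<open>Flat sequences in the Schreier space\<close>

definition schreier_c0_upper_estimate :: "(nat \<Rightarrow> nat \<Rightarrow> real) \<Rightarrow> real \<Rightarrow> bool" where
  "schreier_c0_upper_estimate x A \<longleftrightarrow>
     (\<forall>J a m. finite J \<longrightarrow> 0 \<le> m \<longrightarrow> (\<forall>k\<in>J. \<bar>a k\<bar> \<le> m) \<longrightarrow>
        schreier_norm (\<lambda>i. \<Sum>k\<in>J. a k * x k i) \<le> A * m)"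

lemma sum_power_half_le_2: "finite J \<Longrightarrow> (\<Sum>k\<in>J. (1/2::real) ^ k) \<le> 2"
  using sum_le_suminf[of "\<lambda>k. (1/2::real) ^ k" J] suminf_geometric[of "1/2::real"] by simp

lemma schreier_sum_le_flat:
  assumes "v \<in> schreier_space" "schreier_norm v \<le> B"
    and flat: "\<And>i. real n * \<bar>v i\<bar> \<le> e"
    and tail: "schreier_norm (tail_seq n' v) \<le> e"
    and F: "schreier_admissible F" "F \<noteq> {}"
  shows "(\<Sum>i\<in>F. \<bar>v i\<bar>) \<le> e + (if n \<le> Min F \<and> Min F < n' then B else 0)"
proof -
  have bdd: "bdd_above (schreier_sums v)"
    using assms(1) by (simp add: schreier_space_def)
  have fin: "finite F" and card: "card F \<le> Min F + 1"
    using F by (simp_all add: schreier_admissible_def)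
  have "0 \<le> e"
    using flat[of 0] by (metis abs_ge_zero of_nat_0_le_iff zero_le_mult_iff order_trans)
  consider "n \<le> Min F \<and> Min F < n'" | "n' \<le> Min F" | "Min F < n"
    by linarith
  then show ?thesis
  proof cases
    case 1
    then show ?thesis
      using schreier_sum_le_norm[OF bdd F(1)] assms(2) \<open>0 \<le> e\<close> by simp
  next
    case 2
    then have late: "\<And>i. i \<in> F \<Longrightarrow> n' \<le> i"
      using fin by (meson Min_le order_trans)
    have "(\<Sum>i\<in>F. \<bar>v i\<bar>) \<le> e"
      using schreier_sum_le_tail_norm[OF bdd F(1) late] tail by linarith
    with 2 show ?thesis
      by simp
  next
    case 3
    then have "card F \<le> n" "0 < n"
      using card by simp_all
    have "real n * (\<Sum>i\<in>F. \<bar>v i\<bar>) = (\<Sum>i\<in>F. real n * \<bar>v i\<bar>)"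
      by (simp add: sum_distrib_left)
    also have "\<dots> \<le> real (card F) * e"
      using sum_bounded_above[of F "\<lambda>i. real n * \<bar>v i\<bar>" e] flat by simp
    also have "\<dots> \<le> real n * e"
      using \<open>card F \<le> n\<close> \<open>0 \<le> e\<close> by (simp add: mult_right_mono)
    finally have "(\<Sum>i\<in>F. \<bar>v i\<bar>) \<le> e"
      using \<open>0 < n\<close> by simp
    with 3 show ?thesis
      by simp
  qed
qed

lemma sum_if_unique_le:
  fixes B :: real
  assumes "finite J" "0 \<le> B" "\<And>k l. k \<in> J \<Longrightarrow> l \<in> J \<Longrightarrow> P k \<Longrightarrow> P l \<Longrightarrow> k = l"
  shows "(\<Sum>k\<in>J. if P k then B else 0) \<le> B"
proof -
  have "card {k\<in>J. P k} \<le> Suc 0"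
    using assms(1,3) by (subst card_le_Suc0_iff_eq) auto
  moreover have "(\<Sum>k\<in>J. if P k then B else 0) = B * real (card {k\<in>J. P k})"
    using assms(1) by (simp add: sum.If_cases Int_def)
  ultimately show ?thesis
    using assms(2) by (simp add: mult_left_le)
qed

lemma strict_mono_interval_unique:
  assumes "strict_mono N" "N k \<le> p" "p < N (Suc k)" "N l \<le> p" "p < N (Suc l)"
  shows "k = l"
  using assms by (metis leD linorder_cases order.strict_trans2 Suc_le_eq strict_mono_less_eq)

lemma schreier_c0_upper_estimate_flat:
  fixes x :: "nat \<Rightarrow> nat \<Rightarrow> real"
  assumes N: "strict_mono N"
    and x: "\<And>k. x k \<in> schreier_space" "\<And>k. schreier_norm (x k) \<le> B"
    and flat: "\<And>k i. real (N k) * \<bar>x k i\<bar> \<le> (1/2) ^ k"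
    and tail: "\<And>k. schreier_norm (tail_seq (N (Suc k)) (x k)) \<le> (1/2) ^ k"
  shows "schreier_c0_upper_estimate x (B + 2)"
  unfolding schreier_c0_upper_estimate_def
proof (intro allI impI)
  fix J :: "nat set" and a :: "nat \<Rightarrow> real" and m :: real
  assume J: "finite J" and m: "0 \<le> m" "\<forall>k\<in>J. \<bar>a k\<bar> \<le> m"
  have "0 \<le> B"
    using x[of 0] schreier_norm_nonneg[of "x 0"] by (simp add: schreier_space_def)
  show "schreier_norm (\<lambda>i. \<Sum>k\<in>J. a k * x k i) \<le> (B + 2) * m"
  proof (rule schreier_norm_le)
    fix F assume F: "schreier_admissible F"
    show "(\<Sum>i\<in>F. \<bar>\<Sum>k\<in>J. a k * x k i\<bar>) \<le> (B + 2) * m"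
    proof (cases "F = {}")
      case True
      with \<open>0 \<le> B\<close> m show ?thesis by simp
    next
      case False
      define hit where "hit k \<longleftrightarrow> N k \<le> Min F \<and> Min F < N (Suc k)" for k
      have hits: "(\<Sum>k\<in>J. if hit k then B else 0) \<le> B"
        using J \<open>0 \<le> B\<close> strict_mono_interval_unique[OF N] unfolding hit_def
        by (intro sum_if_unique_le) blast+
      have "(\<Sum>i\<in>F. \<bar>\<Sum>k\<in>J. a k * x k i\<bar>) \<le> (\<Sum>k\<in>J. \<bar>a k\<bar> * (\<Sum>i\<in>F. \<bar>x k i\<bar>))"
        by (rule sum_abs_lincomb_le)
      also have "\<dots> \<le> (\<Sum>k\<in>J. m * ((1/2) ^ k + (if hit k then B else 0)))"
        unfolding hit_def
        using schreier_sum_le_flat[OF x flat tail F False] m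
        by (intro sum_mono mult_mono) auto
      also have "\<dots> = m * ((\<Sum>k\<in>J. (1/2) ^ k) + (\<Sum>k\<in>J. if hit k then B else 0))"
        by (simp only: sum_distrib_left[symmetric] sum.distrib)
      also have "\<dots> \<le> m * (2 + B)"
        using sum_power_half_le_2[OF J] hits m by (intro mult_left_mono) auto
      finally show ?thesis
        by (simp add: algebra_simps)
    qed
  qed
qed

lemma tail_norm_eventually_le:
  assumes "x \<in> schreier_space" "0 < e"
  obtains n' where "n < n'" "schreier_norm (tail_seq n' x) \<le> e"
proof -
  have "(\<lambda>n'. schreier_norm (tail_seq n' x)) \<longlonglongrightarrow> 0"
    using assms(1) by (simp add: schreier_space_def)
  then have "eventually (\<lambda>n'. schreier_norm (tail_seq n' x) < e) sequentially"
    using assms(2) by (rule order_tendstoD)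
  then obtain n0 where "\<And>n'. n0 \<le> n' \<Longrightarrow> schreier_norm (tail_seq n' x) < e"
    unfolding eventually_at_top_linorder by blast
  then show ?thesis
    by (intro that[of "max n0 (Suc n)"]) (simp_all add: less_imp_le)
qed

lemma flat_vector_exists:
  assumes small: "\<And>\<delta>. 0 < \<delta> \<Longrightarrow> \<exists>x\<in>schreier_space. schreier_norm x \<le> B \<and> P x \<and> sup_norm x \<le> \<delta>"
    and "0 < e"
  obtains v where "v \<in> schreier_space" "schreier_norm v \<le> B" "P v" "\<And>i. real n * \<bar>v i\<bar> \<le> e"
proof -
  obtain v where v: "v \<in> schreier_space" "schreier_norm v \<le> B" "P v"
    and sup: "sup_norm v \<le> e / (real n + 1)"
    using small[of "e / (real n + 1)"] \<open>0 < e\<close> by auto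
  have "real n * \<bar>v i\<bar> \<le> e" for i
  proof -
    have "real n * \<bar>v i\<bar> \<le> (real n + 1) * (e / (real n + 1))"
      using abs_le_sup_norm[OF v(1), of i] sup by (intro mult_mono) auto
    then show ?thesis
      by simp
  qed
  with v show ?thesis
    by (rule that)
qed

lemma flat_schreier_sequence:
  assumes small: "\<And>\<delta>. 0 < \<delta> \<Longrightarrow> \<exists>x\<in>schreier_space. schreier_norm x \<le> B \<and> P x \<and> sup_norm x \<le> \<delta>"
  obtains x :: "nat \<Rightarrow> nat \<Rightarrow> real"
  where "\<And>k. x k \<in> schreier_space" "\<And>k. P (x k)" "schreier_c0_upper_estimate x (B + 2)"
proof -
  define good where "good k = (\<lambda>(n, v). v \<in> schreier_space \<and> schreier_norm v \<le> B \<and> P v \<and>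
      (\<forall>i. real n * \<bar>v i\<bar> \<le> (1/2::real) ^ k))" for k
  define step where "step k = (\<lambda>(n :: nat, v) (n', v' :: nat \<Rightarrow> real). n < n' \<and>
      schreier_norm (tail_seq n' v) \<le> (1/2::real) ^ k)" for k
  have flat: "\<exists>v. good k (n, v)" for k n
    using flat_vector_exists[OF small, of "(1/2) ^ k" n] unfolding good_def by auto
  have "\<exists>f. \<forall>k. good k (f k) \<and> step k (f k) (f (Suc k))"
  proof (rule dependent_nat_choice[of good step])
    show "\<exists>p. good 0 p"
      using flat by blast
    fix p k assume "good k p"
    moreover obtain n v where p: "p = (n, v)"
      by (cases p)
    ultimately obtain n' where "n < n'" "schreier_norm (tail_seq n' v) \<le> (1/2) ^ k"
      using tail_norm_eventually_le[of v "(1/2) ^ k" n] by (auto simp: good_def)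
    moreover obtain v' where "good (Suc k) (n', v')"
      using flat by blast
    ultimately show "\<exists>p'. good (Suc k) p' \<and> step k p p'"
      unfolding p step_def by auto
  qed
  then obtain f where f: "\<And>k. good k (f k)" "\<And>k. step k (f k) (f (Suc k))"
    by blast
  define N where "N k = fst (f k)" for k
  define x where "x k = snd (f k)" for k
  have good: "good k (N k, x k)" and step: "step k (N k, x k) (N (Suc k), x (Suc k))" for k
    using f unfolding N_def x_def by simp_all
  have N: "strict_mono N"
    using step by (intro strict_monoI_Suc) (simp add: step_def)
  have x: "x k \<in> schreier_space" "schreier_norm (x k) \<le> B" "P (x k)"
    and flat: "real (N k) * \<bar>x k i\<bar> \<le> (1/2) ^ k"
    and tail: "schreier_norm (tail_seq (N (Suc k)) (x k)) \<le> (1/2) ^ k" for k i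
    using good[of k] step[of k] by (simp_all add: good_def step_def)
  show ?thesis
    by (rule that[OF x(1,3) schreier_c0_upper_estimate_flat[OF N x(1,2) flat tail]])
qed

section \<open>The basis constant of a basic sequence\<close>

definition closed_span :: "(nat \<Rightarrow> 'a::real_normed_vector) \<Rightarrow> 'a set" where
  "closed_span y = closure (span (range y))"

definition partial_sum :: "(nat \<Rightarrow> 'a::real_normed_vector) \<Rightarrow> (nat \<Rightarrow> real) \<Rightarrow> nat \<Rightarrow> 'a" where
  "partial_sum y a n = (\<Sum>i<n. a i *\<^sub>R y i)"

definition basis_coeffs :: "(nat \<Rightarrow> 'a::real_normed_vector) \<Rightarrow> 'a \<Rightarrow> nat \<Rightarrow> real" where
  "basis_coeffs y z = (THE a. partial_sum y a \<longlonglongrightarrow> z)"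

definition bounded_expansions :: "(nat \<Rightarrow> 'a::real_normed_vector) \<Rightarrow> real \<Rightarrow> 'a set" where
  "bounded_expansions y K =
     {z \<in> closed_span y. \<forall>n. norm (partial_sum y (basis_coeffs y z) n) \<le> K}"

definition has_basis_constant :: "(nat \<Rightarrow> 'a::real_normed_vector) \<Rightarrow> real \<Rightarrow> bool" where
  "has_basis_constant y K \<longleftrightarrow>
     (\<forall>a m n. m \<le> n \<longrightarrow> norm (partial_sum y a m) \<le> K * norm (partial_sum y a n))"

lemma partial_sum_in_span: "partial_sum y a n \<in> span (range y)"
  unfolding partial_sum_def by (intro span_sum span_scale span_base) auto

lemma tendsto_partial_sum_closed_span: "partial_sum y a \<longlonglongrightarrow> z \<Longrightarrow> z \<in> closed_span y"
  unfolding closed_span_def closure_sequential using partial_sum_in_span by blast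

lemma zero_in_closed_span: "0 \<in> closed_span y"
  unfolding closed_span_def using closure_subset span_zero by blast

lemma basic_sequence_unique_expansion:
  "basic_sequence y \<Longrightarrow> z \<in> closed_span y \<Longrightarrow> \<exists>!a. partial_sum y a \<longlonglongrightarrow> z"
  unfolding basic_sequence_def closed_span_def partial_sum_def[abs_def] by blast

lemma basis_coeffs_eqI:
  assumes "basic_sequence y" "partial_sum y a \<longlonglongrightarrow> z"
  shows "basis_coeffs y z = a"
  using basic_sequence_unique_expansion[OF assms(1) tendsto_partial_sum_closed_span[OF assms(2)]]
    assms(2)
  unfolding basis_coeffs_def by (blast intro: the1_equality)

lemma partial_sum_basis_coeffs:
  assumes "basic_sequence y" "z \<in> closed_span y"
  shows "partial_sum y (basis_coeffs y z) \<longlonglongrightarrow> z"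
  using basic_sequence_unique_expansion[OF assms] unfolding basis_coeffs_def by (rule theI')

lemma partial_sum_lincomb:
  "partial_sum y (\<lambda>i. s * a i + t * b i) n = s *\<^sub>R partial_sum y a n + t *\<^sub>R partial_sum y b n"
  by (simp add: partial_sum_def scaleR_add_left sum.distrib scaleR_sum_right)

lemma closed_span_lincomb:
  assumes y: "basic_sequence y" and "z \<in> closed_span y" "w \<in> closed_span y"
  shows "s *\<^sub>R z + t *\<^sub>R w \<in> closed_span y"
    and "basis_coeffs y (s *\<^sub>R z + t *\<^sub>R w) = (\<lambda>i. s * basis_coeffs y z i + t * basis_coeffs y w i)"
proof -
  have "partial_sum y (\<lambda>i. s * basis_coeffs y z i + t * basis_coeffs y w i) \<longlonglongrightarrow> s *\<^sub>R z + t *\<^sub>R w"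
    unfolding partial_sum_lincomb using assms
    by (intro tendsto_add tendsto_scaleR tendsto_const partial_sum_basis_coeffs)
  then show "s *\<^sub>R z + t *\<^sub>R w \<in> closed_span y"
    and "basis_coeffs y (s *\<^sub>R z + t *\<^sub>R w) = (\<lambda>i. s * basis_coeffs y z i + t * basis_coeffs y w i)"
    by (auto intro: tendsto_partial_sum_closed_span basis_coeffs_eqI[OF y])
qed

lemma basic_sequence_nonzero:
  assumes "basic_sequence y"
  shows "y i \<noteq> 0"
proof
  assume "y i = 0"
  then have "partial_sum y (\<lambda>j. if j = i then 1 else 0) = (\<lambda>n. 0)"
    by (simp add: partial_sum_def fun_eq_iff if_distrib[of "\<lambda>c. c *\<^sub>R _"] sum.delta' cong: if_cong)
  then have "basis_coeffs y 0 = (\<lambda>j. if j = i then 1 else 0)"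
    using basis_coeffs_eqI[OF assms] by simp
  moreover have "partial_sum y (\<lambda>j. 0) = (\<lambda>n. 0)"
    by (simp add: partial_sum_def fun_eq_iff)
  then have "basis_coeffs y 0 = (\<lambda>j. 0)"
    using basis_coeffs_eqI[OF assms, of "\<lambda>j. 0" 0] by simp
  ultimately show False
    by (metis zero_neq_one)
qed

lemma abs_coeff_le_partial_sum_bound:
  assumes "\<And>n. norm (partial_sum y a n) \<le> K"
  shows "\<bar>a i\<bar> * norm (y i) \<le> 2 * K"
proof -
  have "a i *\<^sub>R y i = partial_sum y a (Suc i) - partial_sum y a i"
    by (simp add: partial_sum_def)
  then have "\<bar>a i\<bar> * norm (y i) \<le> norm (partial_sum y a (Suc i)) + norm (partial_sum y a i)"
    by (metis norm_scaleR norm_triangle_ineq4)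
  with assms[of i] assms[of "Suc i"] show ?thesis
    by linarith
qed

lemma bounded_expansions_lincomb:
  assumes "basic_sequence y" "z \<in> bounded_expansions y K" "w \<in> bounded_expansions y L"
  shows "s *\<^sub>R z + t *\<^sub>R w \<in> bounded_expansions y (\<bar>s\<bar> * K + \<bar>t\<bar> * L)"
proof -
  have span: "z \<in> closed_span y" "w \<in> closed_span y"
    using assms(2,3) by (simp_all add: bounded_expansions_def)
  have "norm (partial_sum y (basis_coeffs y (s *\<^sub>R z + t *\<^sub>R w)) n) \<le> \<bar>s\<bar> * K + \<bar>t\<bar> * L" for n
  proof -
    have "norm (partial_sum y (basis_coeffs y (s *\<^sub>R z + t *\<^sub>R w)) n)
        \<le> \<bar>s\<bar> * norm (partial_sum y (basis_coeffs y z) n)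
          + \<bar>t\<bar> * norm (partial_sum y (basis_coeffs y w) n)"
      unfolding closed_span_lincomb(2)[OF assms(1) span] partial_sum_lincomb
      by (rule order_trans[OF norm_triangle_ineq]) simp
    also have "\<dots> \<le> \<bar>s\<bar> * K + \<bar>t\<bar> * L"
      using assms(2,3) by (intro add_mono mult_left_mono) (auto simp: bounded_expansions_def)
    finally show ?thesis .
  qed
  with closed_span_lincomb(1)[OF assms(1) span] show ?thesis
    by (simp add: bounded_expansions_def)
qed

lemma closed_baire:
  fixes S :: "'a::complete_space set" and A :: "nat \<Rightarrow> 'a set"
  assumes "closed S" "S \<noteq> {}" "S \<subseteq> (\<Union>n. A n)"
  obtains n z0 r where "0 < r" "z0 \<in> S" "S \<inter> ball z0 r \<subseteq> closure (A n)"
proof -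
  define X where "X = top_of_set S"
  define \<G> where "\<G> = range (\<lambda>n. S \<inter> closure (A n))"
  have "completely_metrizable_space X"
    unfolding X_def using assms(1) closed_closedin
    by (blast intro: completely_metrizable_space_closedin completely_metrizable_space_euclidean)
  moreover have "countable \<G>"
    unfolding \<G>_def by simp
  moreover have "\<Union>\<G> = S"
  proof
    show "\<Union>\<G> \<subseteq> S"
      unfolding \<G>_def by blast
    show "S \<subseteq> \<Union>\<G>"
    proof
      fix z assume "z \<in> S"
      moreover from this obtain n where "z \<in> A n"
        using assms(3) by blast
      ultimately show "z \<in> \<Union>\<G>"
        using closure_subset unfolding \<G>_def by blast
    qed
  qed
  moreover have "X interior_of S \<noteq> {}"
    using assms(2) unfolding X_def by (metis interior_of_topspace topspace_euclidean_subtopology)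
  moreover have "closedin X T" if "T \<in> \<G>" for T
    using that closedin_closed_Int unfolding \<G>_def X_def by blast
  ultimately have "\<exists>T\<in>\<G>. X interior_of T \<noteq> {}"
    using Baire_category_alt[of X \<G>] by auto
  then obtain n U where U: "openin X U" "U \<subseteq> S \<inter> closure (A n)" "U \<noteq> {}"
    unfolding \<G>_def interior_of_eq_empty by blast
  then obtain V where V: "open V" "U = S \<inter> V"
    unfolding X_def openin_open by blast
  then obtain z0 where z0: "z0 \<in> S" "z0 \<in> V"
    using U(3) by blast
  then obtain r where r: "0 < r" "ball z0 r \<subseteq> V"
    using V(1) open_contains_ball by blast
  then have "S \<inter> ball z0 r \<subseteq> closure (A n)"
    using U(2) V(2) by blast
  with r(1) z0(1) show ?thesis
    by (rule that)
qed

lemma closed_span_eq_Union_bounded_expansions: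
  assumes y: "basic_sequence y"
  shows "closed_span y = (\<Union>n. bounded_expansions y (real n))"
proof
  show "(\<Union>n. bounded_expansions y (real n)) \<subseteq> closed_span y"
    unfolding bounded_expansions_def by blast
  show "closed_span y \<subseteq> (\<Union>n. bounded_expansions y (real n))"
  proof
    fix z assume z: "z \<in> closed_span y"
    have "Bseq (partial_sum y (basis_coeffs y z))"
      using partial_sum_basis_coeffs[OF y z] by (rule convergent_imp_Bseq[OF convergentI])
    then obtain B where "\<And>n. norm (partial_sum y (basis_coeffs y z) n) \<le> B"
      unfolding Bseq_def by auto
    moreover obtain n :: nat where "B \<le> real n"
      using real_arch_simple by blast
    ultimately have "z \<in> bounded_expansions y (real n)"
      using z unfolding bounded_expansions_def by (auto intro: order_trans)
    then show "z \<in> (\<Union>n. bounded_expansions y (real n))"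
      by blast
  qed
qed

lemma closure_bounded_expansions_centered:
  assumes y: "basic_sequence y" and z0: "z0 \<in> closed_span y"
    and dense: "closed_span y \<inter> ball z0 r \<subseteq> closure (bounded_expansions y K)"
  shows "closed_span y \<inter> ball 0 r \<subseteq> closure (bounded_expansions y K)"
proof
  fix z assume z: "z \<in> closed_span y \<inter> ball 0 r"
  have plus: "z0 + z \<in> closure (bounded_expansions y K)"
    and minus: "z0 - z \<in> closure (bounded_expansions y K)"
    using z closed_span_lincomb(1)[OF y z0, of z 1 1] closed_span_lincomb(1)[OF y z0, of z 1 "-1"]
      dense by (auto simp: dist_norm)
  show "z \<in> closure (bounded_expansions y K)"
    unfolding closure_approachable
  proof (intro allI impI)
    fix e :: real assume "0 < e"
    obtain p where p: "p \<in> bounded_expansions y K" "dist p (z0 + z) < e"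
      using plus \<open>0 < e\<close> unfolding closure_approachable by blast
    obtain q where q: "q \<in> bounded_expansions y K" "dist q (z0 - z) < e"
      using minus \<open>0 < e\<close> unfolding closure_approachable by blast
    define w where "w = (1/2) *\<^sub>R p + (-1/2) *\<^sub>R q"
    have "w - z = (1/2) *\<^sub>R ((p - (z0 + z)) - (q - (z0 - z)))"
      by (simp add: w_def algebra_simps flip: scaleR_add_left)
    then have "dist w z = (1/2) * norm ((p - (z0 + z)) - (q - (z0 - z)))"
      by (simp only: dist_norm norm_scaleR)
    also have "\<dots> \<le> (1/2) * (dist p (z0 + z) + dist q (z0 - z))"
      unfolding dist_norm by (rule mult_left_mono[OF norm_triangle_ineq4]) simp
    also have "\<dots> < (1/2) * (e + e)"
      using p(2) q(2) by (intro mult_strict_left_mono) auto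
    finally have "dist w z < e"
      by simp
    moreover have "w \<in> bounded_expansions y K"
      using bounded_expansions_lincomb[OF y p(1) q(1), of "1/2" "-1/2"] unfolding w_def
      by (simp add: field_simps)
    ultimately show "\<exists>w\<in>bounded_expansions y K. dist w z < e"
      by blast
  qed
qed

lemma closure_bounded_expansions_scaled:
  assumes y: "basic_sequence y" and c: "0 < c"
    and dense: "closed_span y \<inter> ball 0 r \<subseteq> closure (bounded_expansions y K)"
  shows "closed_span y \<inter> ball 0 (c * r) \<subseteq> closure (bounded_expansions y (c * K))"
proof
  fix z assume z: "z \<in> closed_span y \<inter> ball 0 (c * r)"
  have "(1/c) *\<^sub>R z \<in> closed_span y \<inter> ball 0 r"
    using z closed_span_lincomb(1)[OF y _ zero_in_closed_span, of z "1/c" 0] c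
    by (simp add: field_simps)
  with dense have approx: "(1/c) *\<^sub>R z \<in> closure (bounded_expansions y K)"
    by blast
  show "z \<in> closure (bounded_expansions y (c * K))"
    unfolding closure_approachable
  proof (intro allI impI)
    fix e :: real assume "0 < e"
    then obtain w where w: "w \<in> bounded_expansions y K" "dist w ((1/c) *\<^sub>R z) < e / c"
      using approx c unfolding closure_approachable by (meson divide_pos_pos)
    have "c *\<^sub>R w + 0 *\<^sub>R w \<in> bounded_expansions y (\<bar>c\<bar> * K + \<bar>0\<bar> * K)"
      by (rule bounded_expansions_lincomb[OF y w(1) w(1)])
    then have "c *\<^sub>R w \<in> bounded_expansions y (c * K)"
      using c by simp
    moreover have "dist (c *\<^sub>R w) z = c * dist w ((1/c) *\<^sub>R z)"
    proof -
      have "c *\<^sub>R w - z = c *\<^sub>R (w - (1/c) *\<^sub>R z)"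
        using c by (simp add: algebra_simps)
      then show ?thesis
        using c by (simp add: dist_norm)
    qed
    with w(2) c have "dist (c *\<^sub>R w) z < e"
      by (simp add: field_simps)
    ultimately show "\<exists>w\<in>bounded_expansions y (c * K). dist w z < e"
      by blast
  qed
qed

lemma bounded_expansions_series:
  fixes y :: "nat \<Rightarrow> 'a::banach"
  assumes y: "basic_sequence y"
    and w: "\<And>j. w j \<in> bounded_expansions y (M j)" and M: "summable M"
    and z: "(\<lambda>J. \<Sum>j<J. w j) \<longlonglongrightarrow> z"
  shows "z \<in> bounded_expansions y (suminf M)"
proof -
  define c where "c j = basis_coeffs y (w j)" for j
  have w_span: "w j \<in> closed_span y" and c_bound: "norm (partial_sum y (c j) n) \<le> M j" for j n
    using w by (auto simp: bounded_expansions_def c_def)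
  have c_summable: "summable (\<lambda>j. c j i)" for i
  proof (rule summable_comparison_test')
    have "0 < norm (y i)"
      using basic_sequence_nonzero[OF y] by simp
    then show "norm (c j i) \<le> 2 * M j / norm (y i)" for j
      using abs_coeff_le_partial_sum_bound[OF c_bound] by (simp add: pos_le_divide_eq)
    show "summable (\<lambda>j. 2 * M j / norm (y i))"
      by (intro summable_divide summable_mult M)
  qed
  define a where "a i = (\<Sum>j. c j i)" for i
  have a: "partial_sum y a n = (\<Sum>j. partial_sum y (c j) n)" for n
  proof -
    have "partial_sum y a n = (\<Sum>i<n. \<Sum>j. c j i *\<^sub>R y i)"
      unfolding partial_sum_def a_def using c_summable by (simp add: suminf_scaleR_left)
    also have "\<dots> = (\<Sum>j. \<Sum>i<n. c j i *\<^sub>R y i)"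
      using c_summable by (intro suminf_sum[symmetric] summable_scaleR_left)
    finally show ?thesis
      by (simp add: partial_sum_def)
  qed
  have uniform: "uniform_limit UNIV (\<lambda>J n. \<Sum>j<J. partial_sum y (c j) n)
      (\<lambda>n. \<Sum>j. partial_sum y (c j) n) sequentially"
    by (rule Weierstrass_m_test[OF c_bound M])
  have partial: "\<forall>\<^sub>F J in sequentially. (\<lambda>n. \<Sum>j<J. partial_sum y (c j) n) \<longlonglongrightarrow> (\<Sum>j<J. w j)"
    unfolding c_def by (intro always_eventually allI tendsto_sum partial_sum_basis_coeffs y w_span)
  have "(\<lambda>n. \<Sum>j. partial_sum y (c j) n) \<longlonglongrightarrow> z"
    using swap_uniform_limit'[OF partial z uniform] by simp
  then have lim: "partial_sum y a \<longlonglongrightarrow> z"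
    by (simp add: a[abs_def])
  have "norm (partial_sum y a n) \<le> suminf M" for n
    unfolding a using c_bound M by (rule norm_suminf_le)
  with lim show ?thesis
    by (simp add: bounded_expansions_def tendsto_partial_sum_closed_span basis_coeffs_eqI[OF y])
qed

lemma successive_approximation:
  fixes y :: "nat \<Rightarrow> 'a::banach"
  assumes y: "basic_sequence y"
    and dense: "closed_span y \<inter> ball 0 r \<subseteq> closure (bounded_expansions y K)"
    and z: "z \<in> closed_span y \<inter> ball 0 r"
  obtains R where "R 0 = z" "\<And>j. norm (R j) < r * (1/2) ^ j"
    "\<And>j. R j - R (Suc j) \<in> bounded_expansions y (K * (1/2) ^ j)"
proof -
  define good where "good j R \<longleftrightarrow> R \<in> closed_span y \<and> norm R < r * (1/2) ^ j \<and> (j = 0 \<longrightarrow> R = z)"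
    for j R
  define step where "step j R R' \<longleftrightarrow> R - R' \<in> bounded_expansions y (K * (1/2) ^ j)" for j R R'
  have "\<exists>R. \<forall>j. good j (R j) \<and> step j (R j) (R (Suc j))"
  proof (rule dependent_nat_choice[of good step])
    show "\<exists>R. good 0 R"
      using z unfolding good_def by auto
    fix R j assume "good j R"
    then have R: "R \<in> closed_span y \<inter> ball 0 ((1/2) ^ j * r)"
      unfolding good_def by (simp add: mult.commute)
    have "R \<in> closure (bounded_expansions y ((1/2) ^ j * K))"
      by (rule subsetD[OF closure_bounded_expansions_scaled[OF y _ dense] R]) simp
    moreover have "0 < r * (1/2) ^ Suc j"
      using z le_less_trans[OF norm_ge_zero, of z r] by simp
    ultimately obtain w where w: "w \<in> bounded_expansions y ((1/2) ^ j * K)"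
      and close: "dist w R < r * (1/2) ^ Suc j"
      unfolding closure_approachable by blast
    have "1 *\<^sub>R R + (-1) *\<^sub>R w \<in> closed_span y"
      using R w unfolding bounded_expansions_def by (intro closed_span_lincomb(1)[OF y]) auto
    then have "good (Suc j) (R - w)"
      using close unfolding good_def by (simp add: dist_norm norm_minus_commute)
    moreover have "step j R (R - w)"
      using w unfolding step_def by (simp add: mult.commute)
    ultimately show "\<exists>R'. good (Suc j) R' \<and> step j R R'"
      by blast
  qed
  then show ?thesis
    using that unfolding good_def step_def by blast
qed

lemma bounded_expansions_ball:
  fixes y :: "nat \<Rightarrow> 'a::banach"
  assumes y: "basic_sequence y"
    and dense: "closed_span y \<inter> ball 0 r \<subseteq> closure (bounded_expansions y K)"
  shows "closed_span y \<inter> ball 0 r \<subseteq> bounded_expansions y (2 * K)"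
proof
  fix z assume z: "z \<in> closed_span y \<inter> ball 0 r"
  then obtain R where R: "R 0 = z" "\<And>j. norm (R j) < r * (1/2) ^ j"
    and step: "\<And>j. R j - R (Suc j) \<in> bounded_expansions y (K * (1/2) ^ j)"
    using successive_approximation[OF y dense] by blast
  have "\<forall>J. norm (R J) \<le> r * (1/2) ^ J"
    using R(2) by (simp add: less_imp_le)
  moreover have "(\<lambda>J. r * (1/2) ^ J) \<longlonglongrightarrow> 0"
    by (intro tendsto_mult_right_zero LIMSEQ_power_zero) simp
  ultimately have "R \<longlonglongrightarrow> 0"
    by (rule Lim_null_comparison[OF always_eventually])
  then have "(\<lambda>J. R 0 - R J) \<longlonglongrightarrow> z - 0"
    using R(1) by (intro tendsto_diff) auto
  then have "(\<lambda>J. \<Sum>j<J. R j - R (Suc j)) \<longlonglongrightarrow> z"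
    by (simp add: sum_lessThan_telescope')
  moreover have "summable (\<lambda>j. K * (1/2::real) ^ j)"
    by (intro summable_mult summable_geometric) simp
  ultimately have "z \<in> bounded_expansions y (\<Sum>j. K * (1/2) ^ j)"
    using step by (intro bounded_expansions_series[OF y])
  moreover have "(\<Sum>j. K * (1/2::real) ^ j) = 2 * K"
    using suminf_mult[of "\<lambda>j. (1/2::real) ^ j" K] suminf_geometric[of "1/2::real"] by simp
  ultimately show "z \<in> bounded_expansions y (2 * K)"
    by simp
qed

lemma partial_sum_truncate:
  "partial_sum y (\<lambda>i. if i < n then a i else 0) k = partial_sum y a (min k n)"
proof -
  have "partial_sum y (\<lambda>i. if i < n then a i else 0) k
      = (\<Sum>i<k. if i \<in> {..<n} then a i *\<^sub>R y i else 0)"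
    unfolding partial_sum_def by (intro sum.cong) auto
  also have "\<dots> = (\<Sum>i\<in>{..<k} \<inter> {..<n}. a i *\<^sub>R y i)"
    by (simp add: sum.inter_restrict)
  also have "{..<k} \<inter> {..<n} = {..<min k n}"
    by auto
  finally show ?thesis
    by (simp add: partial_sum_def)
qed

lemma has_basis_constant_if_ball:
  fixes y :: "nat \<Rightarrow> 'a::banach"
  assumes y: "basic_sequence y" and r: "0 < r"
    and ball: "closed_span y \<inter> ball 0 r \<subseteq> bounded_expansions y K"
  shows "has_basis_constant y (2 * K / r)"
  unfolding has_basis_constant_def
proof (intro allI impI)
  fix a :: "nat \<Rightarrow> real" and m n :: nat
  assume "m \<le> n"
  define a' where "a' = (\<lambda>i. if i < n then a i else 0)"
  define z where "z = partial_sum y a n"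
  have "partial_sum y a' \<longlonglongrightarrow> z"
    by (rule LIMSEQ_offset[where k = n]) (simp add: a'_def z_def partial_sum_truncate)
  then have z: "z \<in> closed_span y" "basis_coeffs y z = a'"
    by (auto intro: tendsto_partial_sum_closed_span basis_coeffs_eqI[OF y])
  have m: "partial_sum y a m = partial_sum y a' m"
    using \<open>m \<le> n\<close> by (simp add: a'_def partial_sum_truncate)
  show "norm (partial_sum y a m) \<le> 2 * K / r * norm (partial_sum y a n)"
  proof (cases "z = 0")
    case True
    have "partial_sum y (\<lambda>i. 0) = (\<lambda>n. 0)"
      by (simp add: partial_sum_def fun_eq_iff)
    then have "a' = (\<lambda>i. 0)"
      using basis_coeffs_eqI[OF y, of "\<lambda>i. 0" 0] z(2) True by simp
    then have "partial_sum y a m = 0"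
      using m by (simp add: partial_sum_def)
    with True show ?thesis
      by (simp add: z_def)
  next
    case False
    define t where "t = r / (2 * norm z)"
    have t: "0 < t" "norm (t *\<^sub>R z) < r"
      using False r by (simp_all add: t_def)
    have "t *\<^sub>R z + 0 *\<^sub>R z \<in> closed_span y"
      using closed_span_lincomb(1)[OF y z(1) z(1)] .
    with t have "t *\<^sub>R z + 0 *\<^sub>R z \<in> bounded_expansions y K"
      using ball by auto
    then have "norm (partial_sum y (basis_coeffs y (t *\<^sub>R z + 0 *\<^sub>R z)) m) \<le> K"
      unfolding bounded_expansions_def by blast
    then have "t * norm (partial_sum y a m) \<le> K"
      unfolding closed_span_lincomb(2)[OF y z(1) z(1)] partial_sum_lincomb z(2) m
      using t by simp
    then show ?thesis
      using t False r by (simp add: t_def z_def field_simps)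
  qed
qed

lemma has_basis_constant_ge_1:
  assumes "has_basis_constant y C" "y i \<noteq> 0"
  shows "1 \<le> C"
proof -
  have "partial_sum y (\<lambda>j. if j = i then 1 else 0) (Suc i) = y i"
    by (simp add: partial_sum_def if_distrib[of "\<lambda>c. c *\<^sub>R _"] sum.delta' cong: if_cong)
  moreover have "norm (partial_sum y a n) \<le> C * norm (partial_sum y a n)" for a n
    using assms(1) unfolding has_basis_constant_def by blast
  ultimately have "norm (y i) \<le> C * norm (y i)"
    by metis
  with assms(2) show ?thesis
    by simp
qed

lemma basic_sequence_basis_constant:
  fixes y :: "nat \<Rightarrow> 'a::banach"
  assumes y: "basic_sequence y"
  obtains C where "0 < C" "has_basis_constant y C"
proof -
  have "closed (closed_span y)" "closed_span y \<noteq> {}"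
    using zero_in_closed_span[of y] by (auto simp: closed_span_def)
  moreover have "closed_span y \<subseteq> (\<Union>n. bounded_expansions y (real n))"
    using closed_span_eq_Union_bounded_expansions[OF y] by (rule equalityD1)
  ultimately obtain n z0 r where r: "0 < r" and z0: "z0 \<in> closed_span y"
    and "closed_span y \<inter> ball z0 r \<subseteq> closure (bounded_expansions y (real n))"
    by (rule closed_baire)
  then have "closed_span y \<inter> ball 0 r \<subseteq> bounded_expansions y (2 * real n)"
    by (intro bounded_expansions_ball[OF y] closure_bounded_expansions_centered[OF y z0])
  then have "has_basis_constant y (2 * (2 * real n) / r)"
    by (rule has_basis_constant_if_ball[OF y r])
  moreover from this have "1 \<le> 2 * (2 * real n) / r"
    using basic_sequence_nonzero[OF y, of 0] by (rule has_basis_constant_ge_1)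
  ultimately show ?thesis
    by (intro that[of "2 * (2 * real n) / r"]) auto
qed

section \<open>Block bases of 1-averages\<close>

lemma norm_interval_sum_le:
  assumes "has_basis_constant y C" "l \<le> h" "h \<le> n"
  shows "norm (\<Sum>i\<in>{l..<h}. c i *\<^sub>R y i) \<le> 2 * C * norm (partial_sum y c n)"
proof -
  have "partial_sum y c l + (\<Sum>i\<in>{l..<h}. c i *\<^sub>R y i) = partial_sum y c h"
    using sum.atLeastLessThan_concat[of 0 l h "\<lambda>i. c i *\<^sub>R y i"] assms(2)
    by (simp add: partial_sum_def atLeast0LessThan)
  then have "(\<Sum>i\<in>{l..<h}. c i *\<^sub>R y i) = partial_sum y c h - partial_sum y c l"
    by (metis add_diff_cancel_left')
  then have "norm (\<Sum>i\<in>{l..<h}. c i *\<^sub>R y i) \<le> norm (partial_sum y c h) + norm (partial_sum y c l)"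
    by (simp add: norm_triangle_ineq4)
  also have "\<dots> \<le> C * norm (partial_sum y c n) + C * norm (partial_sum y c n)"
    using assms unfolding has_basis_constant_def by (intro add_mono) auto
  finally show ?thesis
    by simp
qed

lemma sum_scaled_blocks_eq_partial_sum:
  assumes "finite J" "\<And>j. j \<in> J \<Longrightarrow> G j \<subseteq> {..<N}"
  shows "(\<Sum>j\<in>J. b j *\<^sub>R (\<Sum>i\<in>G j. y i)) = partial_sum y (\<lambda>i. \<Sum>j\<in>J. if i \<in> G j then b j else 0) N"
proof -
  have "partial_sum y (\<lambda>i. \<Sum>j\<in>J. if i \<in> G j then b j else 0) N
      = (\<Sum>i<N. \<Sum>j\<in>J. if i \<in> G j then b j *\<^sub>R y i else 0)"
    unfolding partial_sum_def by (auto simp: scaleR_sum_left intro!: sum.cong)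
  also have "\<dots> = (\<Sum>j\<in>J. \<Sum>i<N. if i \<in> G j then b j *\<^sub>R y i else 0)"
    by (rule sum.swap)
  also have "\<dots> = (\<Sum>j\<in>J. b j *\<^sub>R (\<Sum>i\<in>G j. y i))"
  proof (rule sum.cong[OF refl])
    fix j assume "j \<in> J"
    then have "{..<N} \<inter> G j = G j"
      using assms(2) by blast
    then show "(\<Sum>i<N. if i \<in> G j then b j *\<^sub>R y i else 0) = b j *\<^sub>R (\<Sum>i\<in>G j. y i)"
      by (simp add: sum.inter_restrict[symmetric] scaleR_sum_right)
  qed
  finally show ?thesis ..
qed

lemma average_weights_at_coordinate_le:
  fixes lam :: "nat \<Rightarrow> real" and F :: "nat \<Rightarrow> nat set"
  assumes C: "has_basis_constant y C" and y1: "\<And>i. norm (y i) = 1" and F: "\<And>k. finite (F k)"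
    and bound: "\<And>K. finite K \<Longrightarrow> norm (\<Sum>k\<in>K. lam k *\<^sub>R (\<Sum>n\<in>F k. y n)) \<le> L"
    and K: "finite K"
  shows "(\<Sum>k\<in>K. if i \<in> F k then lam k else 0) \<le> 2 * C * L"
proof -
  define N where "N = Suc (Max (insert i (\<Union>k\<in>K. F k)))"
  define c where "c n = (\<Sum>k\<in>K. if n \<in> F k then lam k else 0)" for n
  have fin: "finite (insert i (\<Union>k\<in>K. F k))"
    using K F by simp
  have below: "n < N" if "n \<in> insert i (\<Union>k\<in>K. F k)" for n
    using Max_ge[OF fin that] unfolding N_def by simp
  then have "i < N" "\<And>k. k \<in> K \<Longrightarrow> F k \<subseteq> {..<N}"
    by blast+
  have "(\<Sum>k\<in>K. lam k *\<^sub>R (\<Sum>n\<in>F k. y n)) = partial_sum y c N"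
    unfolding c_def by (rule sum_scaled_blocks_eq_partial_sum[OF K]) fact
  then have "norm (partial_sum y c N) \<le> L"
    using bound[OF K] by simp
  have "0 \<le> C"
    using has_basis_constant_ge_1[OF C, of 0] y1[of 0] by fastforce
  have "c i \<le> norm (\<Sum>n\<in>{i..<Suc i}. c n *\<^sub>R y n)"
    using y1 by simp
  also have "\<dots> \<le> 2 * C * norm (partial_sum y c N)"
    using \<open>i < N\<close> by (intro norm_interval_sum_le[OF C]) auto
  also have "\<dots> \<le> 2 * C * L"
    using \<open>norm (partial_sum y c N) \<le> L\<close> \<open>0 \<le> C\<close> by (intro mult_left_mono) auto
  finally show ?thesis
    unfolding c_def .
qed

lemma averages_leave_initial_segments:
  fixes lam :: "nat \<Rightarrow> real" and F :: "nat \<Rightarrow> nat set"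
  assumes C: "has_basis_constant y C" and y1: "\<And>i. norm (y i) = 1" and F: "\<And>k. finite (F k)"
    and bound: "\<And>K. finite K \<Longrightarrow> norm (\<Sum>k\<in>K. lam k *\<^sub>R (\<Sum>n\<in>F k. y n)) \<le> L"
    and "0 < \<epsilon>"
  shows "\<exists>k\<ge>k0. lam k * real (card (F k \<inter> {..<M})) < \<epsilon>"
proof (rule ccontr)
  assume "\<not> ?thesis"
  then have big: "\<epsilon> \<le> lam k * real (card (F k \<inter> {..<M}))" if "k0 \<le> k" for k
    using that by (auto simp: not_less)
  obtain N :: nat where N: "real M * (2 * C * L) < real N * \<epsilon>"
    using ex_less_of_nat_mult[OF \<open>0 < \<epsilon>\<close>] by blast
  have weight: "lam k * real (card (F k \<inter> {..<M})) = (\<Sum>i<M. if i \<in> F k then lam k else 0)" for k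
    by (simp add: sum.If_cases Int_commute)
  have "real N * \<epsilon> \<le> (\<Sum>k\<in>{k0..<k0 + N}. lam k * real (card (F k \<inter> {..<M})))"
    using sum_bounded_below[of "{k0..<k0 + N}" \<epsilon>] big by simp
  also have "\<dots> = (\<Sum>i<M. \<Sum>k\<in>{k0..<k0 + N}. if i \<in> F k then lam k else 0)"
    unfolding weight by (rule sum.swap)
  also have "\<dots> \<le> (\<Sum>i<M. 2 * C * L)"
    by (intro sum_mono average_weights_at_coordinate_le[OF C y1 F bound]) simp_all
  finally show False
    using N by simp
qed

lemma norm_average_diff_tail_le:
  assumes "\<And>i. norm (y i) = 1" "finite F"
  shows "norm (lam *\<^sub>R (\<Sum>n\<in>F. y n) - lam *\<^sub>R (\<Sum>n\<in>F - {..<M}. y n))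
    \<le> \<bar>lam\<bar> * real (card (F \<inter> {..<M}))"
proof -
  have "lam *\<^sub>R (\<Sum>n\<in>F. y n) - lam *\<^sub>R (\<Sum>n\<in>F - {..<M}. y n) = lam *\<^sub>R (\<Sum>n\<in>F \<inter> {..<M}. y n)"
    using sum.Int_Diff[OF assms(2), of y "{..<M}"] by (simp add: algebra_simps)
  also have "norm \<dots> \<le> \<bar>lam\<bar> * (\<Sum>n\<in>F \<inter> {..<M}. norm (y n))"
    by (simp add: mult_left_mono norm_sum)
  finally show ?thesis
    using assms(1) by simp
qed

lemma late_averages_subsequence:
  fixes lam :: "nat \<Rightarrow> real" and F :: "nat \<Rightarrow> nat set"
  assumes late: "\<And>M k0 \<eta>. 0 < \<eta> \<Longrightarrow> \<exists>k\<ge>k0. lam k * real (card (F k \<inter> {..<M})) < \<eta>"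
    and "0 < \<epsilon>"
  obtains kk M where "strict_mono kk" "\<And>j. M (Suc j) = Suc (Max (F (kk j)))"
    "\<And>j. lam (kk j) * real (card (F (kk j) \<inter> {..<M j})) < \<epsilon> * (1/2) ^ j"
proof -
  define good where "good j = (\<lambda>(k, M). lam k * real (card (F k \<inter> {..<M})) < \<epsilon> * (1/2) ^ j)" for j
  define step where
    "step (j :: nat) = (\<lambda>(k :: nat, M :: nat) (k', M'). k < k' \<and> M' = Suc (Max (F k)))" for j
  have "\<exists>p. \<forall>j. good j (p j) \<and> step j (p j) (p (Suc j))"
  proof (rule dependent_nat_choice[of good step])
    have "good 0 (0, 0)"
      using \<open>0 < \<epsilon>\<close> by (simp add: good_def)
    then show "\<exists>p. good 0 p" ..
    fix p j assume "good j p"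
    obtain k M where p: "p = (k, M)"
      by (cases p)
    have "0 < \<epsilon> * (1/2) ^ Suc j"
      using \<open>0 < \<epsilon>\<close> by simp
    then obtain k' where "Suc k \<le> k'"
      "lam k' * real (card (F k' \<inter> {..<Suc (Max (F k))})) < \<epsilon> * (1/2) ^ Suc j"
      using late by blast
    then show "\<exists>p'. good (Suc j) p' \<and> step j p p'"
      unfolding p good_def step_def by (intro exI[of _ "(k', Suc (Max (F k)))"]) auto
  qed
  then obtain p where good: "\<And>j. good j (p j)" and step: "\<And>j. step j (p j) (p (Suc j))"
    by blast
  have "fst (p j) < fst (p (Suc j))" for j
    using step[of j] by (simp add: step_def split: prod.splits)
  then have "strict_mono (\<lambda>j. fst (p j))"
    by (rule strict_monoI_Suc)
  moreover have "snd (p (Suc j)) = Suc (Max (F (fst (p j))))" for j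
    using step[of j] by (simp add: step_def split: prod.splits)
  moreover have
    "lam (fst (p j)) * real (card (F (fst (p j)) \<inter> {..<snd (p j)})) < \<epsilon> * (1/2) ^ j" for j
    using good[of j] by (simp add: good_def split: prod.splits)
  ultimately show ?thesis
    by (rule that)
qed

lemma block_basis_of_1_averages_extraction:
  fixes lam :: "nat \<Rightarrow> real" and F :: "nat \<Rightarrow> nat set"
  assumes y1: "\<And>i. norm (y i) = 1"
    and v: "\<And>k. v k = lam k *\<^sub>R (\<Sum>n\<in>F k. y n)" and lam: "\<And>k. 0 < lam k" and F: "\<And>k. finite (F k)"
    and \<epsilon>: "0 < \<epsilon>" "\<And>k. \<epsilon> < norm (v k)"
    and late: "\<And>M k0 \<eta>. 0 < \<eta> \<Longrightarrow> \<exists>k\<ge>k0. lam k * real (card (F k \<inter> {..<M})) < \<eta>"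
  obtains kk u where "strict_mono kk" "block_basis_of_1_averages y u"
    and "\<And>j. norm (v (kk j) - u j) \<le> \<epsilon> * (1/2) ^ j"
proof -
  obtain kk M where kk: "strict_mono kk" and M: "\<And>j. M (Suc j) = Suc (Max (F (kk j)))"
    and weight: "\<And>j. lam (kk j) * real (card (F (kk j) \<inter> {..<M j})) < \<epsilon> * (1/2) ^ j"
    using late_averages_subsequence[OF late \<epsilon>(1)] by blast
  text \<open>Cutting off the part of the average kk j below M j leaves little out, and M (j + 1) lies
    beyond its support, so the remaining blocks are successive.\<close>
  define G where "G j = F (kk j) - {..<M j}" for j
  define u where "u j = lam (kk j) *\<^sub>R (\<Sum>n\<in>G j. y n)" for j
  have close: "norm (v (kk j) - u j) \<le> \<epsilon> * (1/2) ^ j" for j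
    using norm_average_diff_tail_le[where y = y and F = "F (kk j)" and lam = "lam (kk j)"
        and M = "M j", OF y1 F] weight[of j] lam[of "kk j"]
    unfolding v u_def G_def by simp
  have G_nonempty: "G j \<noteq> {}" for j
  proof
    assume "G j = {}"
    then have "norm (v (kk j)) \<le> \<epsilon> * (1/2) ^ j"
      using close[of j] by (simp add: u_def)
    also have "\<dots> \<le> \<epsilon>"
      using \<epsilon>(1) by (simp add: power_le_one)
    finally show False
      using \<epsilon>(2)[of "kk j"] by simp
  qed
  have "Max (G j) < Min (G (Suc j))" for j
  proof -
    have "Max (G j) \<le> Max (F (kk j))"
      using F G_nonempty by (simp add: G_def Max_mono)
    also have "\<dots> < M (Suc j)"
      using M by simp
    also have "\<dots> \<le> Min (G (Suc j))"
      using F G_nonempty[of "Suc j"] by (simp add: G_def)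
    finally show ?thesis .
  qed
  then have "block_basis_of_1_averages y u"
    unfolding block_basis_of_1_averages_def using lam F G_nonempty
    by (intro exI[of _ "\<lambda>j. lam (kk j)"] exI[of _ G]) (simp add: u_def G_def)
  from kk this close show ?thesis
    by (rule that)
qed

lemma successive_sets_separated:
  fixes G :: "nat \<Rightarrow> nat set"
  assumes G: "\<And>k. finite (G k)" "\<And>k. G k \<noteq> {}" and succ: "\<And>k. Max (G k) < Min (G (Suc k))"
    and "k < l"
  shows "Max (G k) < Min (G l)"
proof -
  have "Min (G k) < Min (G (Suc k))" for k
    using Max_ge[OF G(1) Min_in[OF G(1,2)], of k] succ[of k] by linarith
  then have "strict_mono (\<lambda>k. Min (G k))"
    by (rule strict_monoI_Suc)
  then have "Min (G (Suc k)) \<le> Min (G l)"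
    using strict_mono_less_eq[of "\<lambda>k. Min (G k)" "Suc k" l] \<open>k < l\<close> by simp
  with succ[of k] show ?thesis
    by simp
qed

lemma successive_blocks_interval_sum:
  fixes G :: "nat \<Rightarrow> nat set" and y :: "nat \<Rightarrow> 'a::real_vector"
  assumes G: "\<And>k. finite (G k)" "\<And>k. G k \<noteq> {}" and succ: "\<And>k. Max (G k) < Min (G (Suc k))"
    and "j \<le> n"
  shows "(\<Sum>i\<in>{Min (G j)..<Suc (Max (G j))}. (\<Sum>k\<le>n. if i \<in> G k then b k else 0) *\<^sub>R y i)
    = b j *\<^sub>R (\<Sum>i\<in>G j. y i)"
proof -
  define I where "I = {Min (G j)..<Suc (Max (G j))}"
  note sep = successive_sets_separated[of G, OF G succ]
  have mem: "Min (G k) \<le> i \<and> i \<le> Max (G k)" if "i \<in> G k" for i k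
    using that G by simp
  have "G j \<subseteq> I"
    using mem unfolding I_def by fastforce
  have "(\<Sum>k\<le>n. if i \<in> G k then b k else 0) = (if i \<in> G j then b j else 0)" if "i \<in> I" for i
  proof -
    have "i \<notin> G k" if "k \<noteq> j" for k
      using \<open>i \<in> I\<close> sep[of k j] sep[of j k] mem[of i k] \<open>k \<noteq> j\<close>
      unfolding I_def by (cases "k < j") auto
    then have "(\<Sum>k\<le>n. if i \<in> G k then b k else 0)
        = (\<Sum>k\<le>n. if k = j then (if i \<in> G j then b j else 0) else 0)"
      by (intro sum.cong) auto
    with \<open>j \<le> n\<close> show ?thesis
      by simp
  qed
  then have "(\<Sum>i\<in>I. (\<Sum>k\<le>n. if i \<in> G k then b k else 0) *\<^sub>R y i)
      = (\<Sum>i\<in>I. if i \<in> G j then b j *\<^sub>R y i else 0)"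
    by (intro sum.cong) auto
  also have "\<dots> = (\<Sum>i\<in>I \<inter> G j. b j *\<^sub>R y i)"
    by (simp add: sum.inter_restrict I_def)
  also have "I \<inter> G j = G j"
    using \<open>G j \<subseteq> I\<close> by blast
  finally show ?thesis
    by (simp add: I_def scaleR_sum_right)
qed

lemma block_basis_of_1_averages_lower_estimate:
  assumes C: "has_basis_constant y C" and u: "block_basis_of_1_averages y u" and "j \<le> n"
  shows "\<bar>a j\<bar> * norm (u j) \<le> 2 * C * norm (\<Sum>k\<le>n. a k *\<^sub>R u k)"
proof -
  obtain lam G where G: "\<And>k. finite (G k)" "\<And>k. G k \<noteq> {}"
    and u_eq: "\<And>k. u k = lam k *\<^sub>R (\<Sum>i\<in>G k. y i)" and succ: "\<And>k. Max (G k) < Min (G (Suc k))"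
    using u unfolding block_basis_of_1_averages_def by blast
  define N where "N = Suc (Max (G n))"
  define c where "c i = (\<Sum>k\<le>n. if i \<in> G k then a k * lam k else 0)" for i
  have Min_le_Max: "Min (G k) \<le> Max (G k)" for k
    using Max_ge[OF G(1) Min_in[OF G(1,2)]] .
  have Max_le: "Max (G k) \<le> Max (G n)" if "k \<le> n" for k
  proof (cases "k = n")
    case False
    with that have "k < n"
      by simp
    with successive_sets_separated[of G, OF G succ] Min_le_Max[of n] show ?thesis
      by (meson less_imp_le order_trans)
  qed simp
  have blocks: "G k \<subseteq> {..<N}" if "k \<le> n" for k
  proof
    fix i assume "i \<in> G k"
    then have "i \<le> Max (G k)"
      by (rule Max_ge[OF G(1)])
    with Max_le[OF that] show "i \<in> {..<N}"
      by (simp add: N_def)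
  qed
  have "(\<Sum>k\<le>n. a k *\<^sub>R u k) = partial_sum y c N"
    unfolding u_eq scaleR_scaleR c_def by (intro sum_scaled_blocks_eq_partial_sum blocks) auto
  moreover have "(\<Sum>i\<in>{Min (G j)..<Suc (Max (G j))}. c i *\<^sub>R y i) = a j *\<^sub>R u j"
    unfolding c_def u_eq scaleR_scaleR using \<open>j \<le> n\<close>
    by (rule successive_blocks_interval_sum[of G, OF G succ])
  moreover have "norm (\<Sum>i\<in>{Min (G j)..<Suc (Max (G j))}. c i *\<^sub>R y i)
      \<le> 2 * C * norm (partial_sum y c N)"
    using Min_le_Max[of j] Max_le[OF \<open>j \<le> n\<close>]
    by (intro norm_interval_sum_le[OF C]) (simp_all add: N_def)
  ultimately show ?thesis
    by simp
qed

definition c0_upper_estimate :: "(nat \<Rightarrow> 'a::real_normed_vector) \<Rightarrow> real \<Rightarrow> bool" where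
  "c0_upper_estimate v A \<longleftrightarrow>
     (\<forall>J a m. finite J \<longrightarrow> 0 \<le> m \<longrightarrow> (\<forall>k\<in>J. \<bar>a k\<bar> \<le> m) \<longrightarrow> norm (\<Sum>k\<in>J. a k *\<^sub>R v k) \<le> A * m)"

lemma c0_upper_estimate_perturbation:
  assumes v: "c0_upper_estimate v A" and kk: "strict_mono kk"
    and close: "\<And>j. norm (v (kk j) - u j) \<le> \<epsilon> * (1/2) ^ j"
    and m: "0 \<le> m" "\<And>k. k \<le> n \<Longrightarrow> \<bar>a k\<bar> \<le> m"
  shows "norm (\<Sum>k\<le>n. a k *\<^sub>R u k) \<le> (A + 2 * \<epsilon>) * m"
proof -
  have "inj kk"
    using kk by (rule strict_mono_imp_inj_on)
  have "norm (v (kk 0) - u 0) \<le> \<epsilon>"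
    using close[of 0] by simp
  then have "0 \<le> \<epsilon>"
    by (meson norm_ge_zero order_trans)
  have "(\<Sum>k\<le>n. a k *\<^sub>R v (kk k)) = (\<Sum>i\<in>kk ` {..n}. a (inv kk i) *\<^sub>R v i)"
    using \<open>inj kk\<close> by (simp add: sum.reindex inj_on_subset)
  also have "norm \<dots> \<le> A * m"
    using v m \<open>inj kk\<close> unfolding c0_upper_estimate_def by auto
  finally have main: "norm (\<Sum>k\<le>n. a k *\<^sub>R v (kk k)) \<le> A * m" .
  have "norm (\<Sum>k\<le>n. a k *\<^sub>R (v (kk k) - u k)) \<le> (\<Sum>k\<le>n. m * (\<epsilon> * (1/2) ^ k))"
    using m close by (intro order_trans[OF norm_sum] sum_mono) (simp add: mult_mono)
  also have "\<dots> = m * \<epsilon> * (\<Sum>k\<le>n. (1/2) ^ k)"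
    by (simp add: sum_distrib_left mult.assoc)
  also have "\<dots> \<le> m * \<epsilon> * 2"
    using \<open>0 \<le> \<epsilon>\<close> m by (intro mult_left_mono sum_power_half_le_2) auto
  finally have error: "norm (\<Sum>k\<le>n. a k *\<^sub>R (v (kk k) - u k)) \<le> 2 * \<epsilon> * m"
    by (simp add: ac_simps)
  have "(\<Sum>k\<le>n. a k *\<^sub>R u k) = (\<Sum>k\<le>n. a k *\<^sub>R v (kk k)) - (\<Sum>k\<le>n. a k *\<^sub>R (v (kk k) - u k))"
    by (simp add: scaleR_diff_right sum_subtractf)
  then have "norm (\<Sum>k\<le>n. a k *\<^sub>R u k)
      \<le> norm (\<Sum>k\<le>n. a k *\<^sub>R v (kk k)) + norm (\<Sum>k\<le>n. a k *\<^sub>R (v (kk k) - u k))"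
    by (metis norm_triangle_ineq4)
  also have "\<dots> \<le> A * m + 2 * \<epsilon> * m"
    using main error by (rule add_mono)
  finally show ?thesis
    by (simp add: distrib_right)
qed

lemma equiv_c0_basisI:
  fixes u :: "nat \<Rightarrow> 'a::real_normed_vector"
  assumes "0 < c" "0 < D"
    and lower: "\<And>n a j. j \<le> n \<Longrightarrow> c * \<bar>a j\<bar> \<le> norm (\<Sum>k\<le>n. a k *\<^sub>R u k)"
    and upper: "\<And>n a m. 0 \<le> m \<Longrightarrow> (\<And>k. k \<le> n \<Longrightarrow> \<bar>a k\<bar> \<le> m) \<Longrightarrow>
                   norm (\<Sum>k\<le>n. a k *\<^sub>R u k) \<le> D * m"
  shows "equiv_c0_basis u"
  unfolding equiv_c0_basis_def
proof (intro exI conjI allI)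
  fix n and a :: "nat \<Rightarrow> real"
  have "(MAX k\<in>{..n}. \<bar>a k\<bar>) \<in> (\<lambda>k. \<bar>a k\<bar>) ` {..n}"
    by (rule Max_in) auto
  then obtain j where j: "j \<in> {..n}" "(MAX k\<in>{..n}. \<bar>a k\<bar>) = \<bar>a j\<bar>"
    by blast
  with lower[of j n a] show "c * (MAX k\<in>{..n}. \<bar>a k\<bar>) \<le> norm (\<Sum>k\<le>n. a k *\<^sub>R u k)"
    by simp
  have "\<bar>a k\<bar> \<le> (MAX k\<in>{..n}. \<bar>a k\<bar>)" if "k \<le> n" for k
    using that by (intro Max_ge) auto
  moreover from this[of 0] have "0 \<le> (MAX k\<in>{..n}. \<bar>a k\<bar>)"
    using abs_ge_zero[of "a 0"] by linarith
  ultimately show "norm (\<Sum>k\<le>n. a k *\<^sub>R u k) \<le> D * (MAX k\<in>{..n}. \<bar>a k\<bar>)"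
    by (intro upper)
qed (use assms in auto)

lemma c0_upper_estimate_sum_le:
  assumes "c0_upper_estimate v A" "finite K"
  shows "norm (\<Sum>k\<in>K. v k) \<le> A"
  using assms(1)[unfolded c0_upper_estimate_def, rule_format, where J = K and a = "\<lambda>_. 1" and m = 1]
    assms(2) by simp

lemma perturbed_block_basis_equiv_c0_basis:
  assumes C: "has_basis_constant y C" "0 < C" and u: "block_basis_of_1_averages y u"
    and A: "c0_upper_estimate v A" and kk: "strict_mono kk"
    and close: "\<And>j. norm (v (kk j) - u j) \<le> \<epsilon> * (1/2) ^ j"
    and \<rho>: "\<epsilon> < \<rho>" "\<And>k. \<rho> \<le> norm (v k)"
  shows "equiv_c0_basis u"
proof (rule equiv_c0_basisI)
  have "norm (v (kk 0) - u 0) \<le> \<epsilon>"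
    using close[of 0] by simp
  then have "0 \<le> \<epsilon>"
    by (meson norm_ge_zero order_trans)
  have "\<rho> \<le> A"
    using c0_upper_estimate_sum_le[OF A, of "{0}"] \<rho>(2)[of 0] by simp
  with \<rho>(1) \<open>0 \<le> \<epsilon>\<close> C(2) show "0 < (\<rho> - \<epsilon>) / (2 * C)" "0 < A + 2 * \<epsilon>"
    by simp_all
  fix n j :: nat and a :: "nat \<Rightarrow> real"
  assume "j \<le> n"
  have "\<epsilon> * (1/2) ^ j \<le> \<epsilon>"
    using \<open>0 \<le> \<epsilon>\<close> by (simp add: mult_left_le power_le_one)
  with close[of j] \<rho>(2)[of "kk j"] have "\<rho> - \<epsilon> \<le> norm (u j)"
    using norm_triangle_ineq2[of "v (kk j)" "u j"] by linarith
  then have "(\<rho> - \<epsilon>) * \<bar>a j\<bar> \<le> \<bar>a j\<bar> * norm (u j)"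
    by (simp add: mult.commute mult_left_mono)
  also have "\<dots> \<le> 2 * C * norm (\<Sum>k\<le>n. a k *\<^sub>R u k)"
    using block_basis_of_1_averages_lower_estimate[OF C(1) u \<open>j \<le> n\<close>] .
  finally show "(\<rho> - \<epsilon>) / (2 * C) * \<bar>a j\<bar> \<le> norm (\<Sum>k\<le>n. a k *\<^sub>R u k)"
    using C(2) by (simp add: field_simps)
next
  fix n :: nat and a :: "nat \<Rightarrow> real" and m :: real
  assume "0 \<le> m" "\<And>k. k \<le> n \<Longrightarrow> \<bar>a k\<bar> \<le> m"
  then show "norm (\<Sum>k\<le>n. a k *\<^sub>R u k) \<le> (A + 2 * \<epsilon>) * m"
    by (rule c0_upper_estimate_perturbation[OF A kk close])
qed

lemma c0_block_basis_of_1_averages: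
  fixes y v :: "nat \<Rightarrow> 'a::banach"
  assumes y: "basic_sequence y" "\<And>i. norm (y i) = 1"
    and v: "\<And>k. one_average y (v k)" "0 < \<rho>" "\<And>k. \<rho> \<le> norm (v k)"
    and A: "c0_upper_estimate v A"
  obtains u where "block_basis_of_1_averages y u" "equiv_c0_basis u"
proof -
  obtain C where C: "0 < C" "has_basis_constant y C"
    using basic_sequence_basis_constant[OF y(1)] .
  have "\<forall>k. \<exists>l G. 0 < l \<and> finite G \<and> v k = l *\<^sub>R (\<Sum>n\<in>G. y n)"
    using v(1) unfolding one_average_def by blast
  then obtain lam F where lam: "\<And>k. 0 < lam k" and F: "\<And>k. finite (F k)"
    and v_eq: "\<And>k. v k = lam k *\<^sub>R (\<Sum>n\<in>F k. y n)"
    by metis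
  have late: "\<exists>k\<ge>k0. lam k * real (card (F k \<inter> {..<M})) < \<eta>" if "0 < \<eta>" for M k0 \<eta>
    using c0_upper_estimate_sum_le[OF A] v_eq
    by (intro averages_leave_initial_segments[OF C(2) y(2) F _ that]) simp
  have half: "0 < \<rho> / 2" "\<rho> / 2 < norm (v k)" for k
    using v(2) v(3)[of k] by simp_all
  obtain kk u where kk: "strict_mono kk" and u: "block_basis_of_1_averages y u"
    and close: "\<And>j. norm (v (kk j) - u j) \<le> \<rho> / 2 * (1/2) ^ j"
    using block_basis_of_1_averages_extraction[OF y(2) v_eq lam F half late] by blast
  have "equiv_c0_basis u"
    by (rule perturbed_block_basis_equiv_c0_basis[OF C(2,1) u A kk close]) (use v(2,3) in auto)
  with u show ?thesis
    by (rule that)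
qed

lemma c0_upper_estimate_image:
  assumes T: "schreier_bounded_linear T" and x: "\<And>k. x k \<in> schreier_space"
    and est: "schreier_c0_upper_estimate x A"
  obtains A' where "c0_upper_estimate (\<lambda>k. T (x k)) A'"
proof -
  obtain K where K: "0 \<le> K" "\<And>z. z \<in> schreier_space \<Longrightarrow> norm (T z) \<le> K * schreier_norm z"
    using schreier_bounded_linear_bound[OF T] by blast
  have "norm (\<Sum>k\<in>J. a k *\<^sub>R T (x k)) \<le> K * A * m"
    if "finite J" "0 \<le> m" "\<forall>k\<in>J. \<bar>a k\<bar> \<le> m" for J a m
  proof -
    have "norm (\<Sum>k\<in>J. a k *\<^sub>R T (x k)) = norm (T (\<lambda>i. \<Sum>k\<in>J. a k * x k i))"
      using schreier_bounded_linear_lincomb[OF T that(1)] x by simp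
    also have "\<dots> \<le> K * schreier_norm (\<lambda>i. \<Sum>k\<in>J. a k * x k i)"
      using x by (intro K(2) schreier_space_lincomb)
    also have "\<dots> \<le> K * (A * m)"
      using that est K(1) unfolding schreier_c0_upper_estimate_def by (intro mult_left_mono) auto
    finally show ?thesis
      by simp
  qed
  then show ?thesis
    by (intro that[of "K * A"]) (simp add: c0_upper_estimate_def)
qed

theorem lemma2p2:
  fixes T :: "(nat \<Rightarrow> real) \<Rightarrow> 'b::banach"
    and C :: real
    and y :: "nat \<Rightarrow> 'b"
  assumes T_bl: "schreier_bounded_linear T"
    and T_onto: "T ` schreier_space = UNIV"
    and C_pos: "C > 0"
    and C_ball: "\<forall>v::'b. norm v \<le> 1 \<longrightarrow>
                   (\<exists>x\<in>schreier_space. schreier_norm x \<le> C \<and> T x = v)"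
    and y_norm: "\<forall>i. norm (y i) = 1"
    and y_weak: "weakly_null y"
    and y_basic: "basic_sequence y"
    and no_c0: "\<not> (\<exists>u. block_basis_of_1_averages y u \<and> equiv_c0_basis u)"
  shows "\<exists>\<delta>>0. \<forall>x\<in>schreier_space.
           schreier_norm x \<le> 3 * C \<and> one_average y (T x) \<and> norm (T x) > 1/3
           \<longrightarrow> sup_norm x > \<delta>"
proof (rule ccontr)
  assume contra: "\<not> ?thesis"
  have small: "\<exists>x\<in>schreier_space. schreier_norm x \<le> 3 * C \<and>
      (one_average y (T x) \<and> 1/3 \<le> norm (T x)) \<and> sup_norm x \<le> \<delta>" if "0 < \<delta>" for \<delta>
  proof -
    from contra that obtain x where "x \<in> schreier_space"
      "schreier_norm x \<le> 3 * C \<and> one_average y (T x) \<and> norm (T x) > 1/3" "\<not> sup_norm x > \<delta>"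
      by blast
    then show ?thesis
      by (intro bexI[of _ x]) auto
  qed
  obtain x where x: "\<And>k. x k \<in> schreier_space"
      "\<And>k. one_average y (T (x k)) \<and> 1/3 \<le> norm (T (x k))"
    and "schreier_c0_upper_estimate x (3 * C + 2)"
    using flat_schreier_sequence[OF small] by blast
  then obtain A where A: "c0_upper_estimate (\<lambda>k. T (x k)) A"
    using c0_upper_estimate_image[OF T_bl] by blast
  have "\<And>i. norm (y i) = 1" "(0::real) < 1/3"
    using y_norm by simp_all
  then obtain u where "block_basis_of_1_averages y u" "equiv_c0_basis u"
    using c0_block_basis_of_1_averages[OF y_basic _ _ _ _ A] x(2) by blast
  with no_c0 show False
    by blast
qed

end
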